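(* Let $V:\Omega\to[1,\infty)$ be continuous, let $\varphi$ be an admissible rate function with $\varphi(v)\le v$ for all $v\ge1$, and let $(S_t)_{t\ge0}$ be a Feller-type stochastic semigroup on $\mathcal M_V$ satisfying, for some constants $b,\sigma>0$, the weak generator Lyapunov condition $$\|S_t\mu\|_V\le\|\mu\|_V+\int_0^t\big(b\|S_u\mu\|-\sigma\|S_u\mu\|_{\varphi(V)}\big)\,du\qquad\text{for all }t\ge0\text{ and all nonnegative }\mu\in\mathcal M_V .$$ Then for all $t\ge0$ and all nonnegative $\mu\in\mathcal M_V$, $$\|S_t\mu\|_V+\sigma t\,\|S_t\mu\|_{\varphi(V)}\le\|\mu\|_V+bt\Big(1+\frac{\sigma t}2\Big)\|\mu\| .$$
   Context: $\Omega$ is a locally compact separable metric space with its Borel $\sigma$-algebra. $\mathcal M$ denotes the space of finite signed measures on $\Omega$ and $\mathcal P$ the probability measures. For $\mu\in\mathcal M$ with Hahn–Jordan decomposition $\mu=\mu_+-\mu_-$, $|\mu|=\mu_++\mu_-$ and $\|\mu\|=\int_\Omega d|\mu|$ is the total variation norm. For a measurable $W:\Omega\to[1,\infty)$, $\|\mu\|_W=\int_\Omega W\,d|\mu|$, $\mathcal M_W=\{\mu\in\mathcal M:\|\mu\|_W<\infty\}$. A stochastic operator is a linear map $S:\mathcal M\to\mathcal M$ with $S(\mathcal P)\subseteq\mathcal P$. A stochastic semigroup is a family $(S_t)_{t\ge0}$ of stochastic operators with $S_0=I$ and $S_tS_s=S_{t+s}$; it is a stochastic semigroup on $\mathcal M_W$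 if moreover each $S_t$ maps $\mathcal M_W$ into itself and $\|S_t\mu\|_W\le C_We^{\omega_Wt}\|\mu\|_W$ for some $C_W\ge1,\omega_W\ge0$. A Markov–Feller operator is a bounded linear operator on $C_0(\Omega)$ (continuous functions vanishing at infinity, sup norm) which is positive and satisfies $Pf_n\nearrow1$ pointwise whenever $f_n\nearrow1$ pointwise. A stochastic semigroup is of Feller type if $S_t=P_t^*$ for all $t$, where $(P_t)_{t\ge0}$ is a strongly continuous semigroup of Markov–Feller operators on $C_0(\Omega)$ (using $C_0(\Omega)^*=\mathcal M$). An admissible rate function is a concave function $\varphi:[1,\infty)\to[1,\infty)$ with $\varphi(1)=1$ and $\varphi(v)/v\to0$ as $v\to\infty$; $\varphi(V)$ denotes $\varphi\circ V$. *)

theory Defs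
  imports "HOL-Analysis.Analysis"
begin

text \<open>Finite signed Borel measures on a space of type 'a are represented by their
  values on sets, normalised to 0 on non-Borel sets.\<close>

definition fsm :: "('a::topological_space set \<Rightarrow> real) \<Rightarrow> bool" where
  "fsm \<mu> \<longleftrightarrow>
     (\<exists>M1 M2. sets M1 = sets borel \<and> sets M2 = sets borel \<and>
        finite_measure M1 \<and> finite_measure M2 \<and>
        (\<forall>A\<in>sets borel. \<mu> A = measure M1 A - measure M2 A)) \<and>
     (\<forall>A. A \<notin> sets borel \<longrightarrow> \<mu> A = 0)"

definition prob_sm :: "('a::topological_space set \<Rightarrow> real) \<Rightarrow> bool" where
  "prob_sm \<mu> \<longleftrightarrow> fsm \<mu> \<and> (\<forall>A. \<mu> A \<ge> 0) \<and> \<mu> UNIV = 1"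

definition jpos :: "('a::topological_space set \<Rightarrow> real) \<Rightarrow> 'a measure" where
  "jpos \<mu> = measure_of UNIV (sets borel)
     (\<lambda>A. ennreal (Sup {\<mu> B | B. B \<in> sets borel \<and> B \<subseteq> A}))"

definition jneg :: "('a::topological_space set \<Rightarrow> real) \<Rightarrow> 'a measure" where
  "jneg \<mu> = measure_of UNIV (sets borel)
     (\<lambda>A. ennreal (Sup {- \<mu> B | B. B \<in> sets borel \<and> B \<subseteq> A}))"

text \<open>Weighted norm \<open>\<parallel>\<mu>\<parallel>_W = \<integral> W d|\<mu>|\<close> with \<open>|\<mu>| = \<mu>_+ + \<mu>_-\<close>
  (ennreal-valued; \<open>\<mu> \<in> M_W\<close> iff it is finite). The total variation norm is
  the case \<open>W = 1\<close>.\<close>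
definition wnorm :: "('a::topological_space \<Rightarrow> real) \<Rightarrow> ('a set \<Rightarrow> real) \<Rightarrow> ennreal" where
  "wnorm W \<mu> = (\<integral>\<^sup>+ x. ennreal (W x) \<partial>jpos \<mu>) + (\<integral>\<^sup>+ x. ennreal (W x) \<partial>jneg \<mu>)"

definition sm_integral :: "('a::topological_space set \<Rightarrow> real) \<Rightarrow> ('a \<Rightarrow> real) \<Rightarrow> real" where
  "sm_integral \<mu> f = integral\<^sup>L (jpos \<mu>) f - integral\<^sup>L (jneg \<mu>) f"

definition stochastic_op ::
  "(('a::topological_space set \<Rightarrow> real) \<Rightarrow> ('a set \<Rightarrow> real)) \<Rightarrow> bool" where
  "stochastic_op S \<longleftrightarrow>
     (\<forall>\<mu>. fsm \<mu> \<longrightarrow> fsm (S \<mu>)) \<and>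
     (\<forall>\<mu> \<nu> a b. fsm \<mu> \<longrightarrow> fsm \<nu> \<longrightarrow>
        S (\<lambda>A. a * \<mu> A + b * \<nu> A) = (\<lambda>A. a * S \<mu> A + b * S \<nu> A)) \<and>
     (\<forall>\<mu>. prob_sm \<mu> \<longrightarrow> prob_sm (S \<mu>))"

definition stochastic_semigroup ::
  "(real \<Rightarrow> ('a::topological_space set \<Rightarrow> real) \<Rightarrow> ('a set \<Rightarrow> real)) \<Rightarrow> bool" where
  "stochastic_semigroup S \<longleftrightarrow>
     (\<forall>t\<ge>0. stochastic_op (S t)) \<and>
     (\<forall>\<mu>. fsm \<mu> \<longrightarrow> S 0 \<mu> = \<mu>) \<and>
     (\<forall>t s \<mu>. t \<ge> 0 \<longrightarrow> s \<ge> 0 \<longrightarrow> fsm \<mu> \<longrightarrow> S t (S s \<mu>) = S (t + s) \<mu>)"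

definition stochastic_semigroup_on ::
  "('a::topological_space \<Rightarrow> real) \<Rightarrow> (real \<Rightarrow> ('a set \<Rightarrow> real) \<Rightarrow> ('a set \<Rightarrow> real)) \<Rightarrow> bool" where
  "stochastic_semigroup_on W S \<longleftrightarrow>
     stochastic_semigroup S \<and>
     (\<forall>t\<ge>0. \<forall>\<mu>. fsm \<mu> \<and> wnorm W \<mu> < \<infinity> \<longrightarrow> wnorm W (S t \<mu>) < \<infinity>) \<and>
     (\<exists>C \<omega>. C \<ge> 1 \<and> \<omega> \<ge> 0 \<and>
        (\<forall>t\<ge>0. \<forall>\<mu>. fsm \<mu> \<and> wnorm W \<mu> < \<infinity> \<longrightarrow>
           wnorm W (S t \<mu>) \<le> ennreal (C * exp (\<omega> * t)) * wnorm W \<mu>))"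

definition C0 :: "('a::topological_space \<Rightarrow> real) set" where
  "C0 = {f. continuous_on UNIV f \<and>
            (\<forall>e>0. \<exists>K. compact K \<and> (\<forall>x. x \<notin> K \<longrightarrow> \<bar>f x\<bar> < e))}"

definition supnorm :: "('a \<Rightarrow> real) \<Rightarrow> real" where
  "supnorm f = (SUP x. \<bar>f x\<bar>)"

definition markov_feller :: "(('a::topological_space \<Rightarrow> real) \<Rightarrow> ('a \<Rightarrow> real)) \<Rightarrow> bool" where
  "markov_feller P \<longleftrightarrow>
     (\<forall>f\<in>C0. P f \<in> C0) \<and>
     (\<forall>f\<in>C0. \<forall>g\<in>C0. \<forall>a b. P (\<lambda>x. a * f x + b * g x) = (\<lambda>x. a * P f x + b * P g x)) \<and>
     (\<exists>C. \<forall>f\<in>C0. supnorm (P f) \<le> C * supnorm f) \<and>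
     (\<forall>f\<in>C0. (\<forall>x. f x \<ge> 0) \<longrightarrow> (\<forall>x. P f x \<ge> 0)) \<and>
     (\<forall>F. (\<forall>n. F n \<in> C0) \<longrightarrow>
        (\<forall>x. incseq (\<lambda>n. F n x) \<and> (\<lambda>n. F n x) \<longlonglongrightarrow> 1) \<longrightarrow>
        (\<forall>x. incseq (\<lambda>n. P (F n) x) \<and> (\<lambda>n. P (F n) x) \<longlonglongrightarrow> 1))"

definition feller_semigroup ::
  "(real \<Rightarrow> ('a::topological_space \<Rightarrow> real) \<Rightarrow> ('a \<Rightarrow> real)) \<Rightarrow> bool" where
  "feller_semigroup P \<longleftrightarrow>
     (\<forall>t\<ge>0. markov_feller (P t)) \<and>
     (\<forall>f\<in>C0. P 0 f = f) \<and>
     (\<forall>t s f. t \<ge> 0 \<longrightarrow> s \<ge> 0 \<longrightarrow> f \<in> C0 \<longrightarrow> P (t + s) f = P t (P s f)) \<and>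
     (\<forall>f\<in>C0. \<forall>t\<ge>0.
        ((\<lambda>s. supnorm (\<lambda>x. P s f x - P t f x)) \<longlongrightarrow> 0) (at t within {0..}))"

definition feller_type ::
  "(real \<Rightarrow> ('a::topological_space set \<Rightarrow> real) \<Rightarrow> ('a set \<Rightarrow> real)) \<Rightarrow> bool" where
  "feller_type S \<longleftrightarrow>
     stochastic_semigroup S \<and>
     (\<exists>P. feller_semigroup P \<and>
        (\<forall>t\<ge>0. \<forall>\<mu>. fsm \<mu> \<longrightarrow> (\<forall>f\<in>C0. sm_integral (S t \<mu>) f = sm_integral \<mu> (P t f))))"

definition admissible_rate :: "(real \<Rightarrow> real) \<Rightarrow> bool" where
  "admissible_rate \<phi> \<longleftrightarrow>
     concave_on {1..} \<phi> \<and> (\<forall>v\<ge>1. \<phi> v \<ge> 1) \<and> \<phi> 1 = 1 \<and>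
     ((\<lambda>v. \<phi> v / v) \<longlongrightarrow> 0) at_top"

end

theory Submission
  imports Defs
begin

text \<open>Write \<open>\<parallel>\<nu>\<parallel>\<^sub>W\<close> for \<open>wnorm W \<nu>\<close>, \<open>\<parallel>\<nu>\<parallel>\<^sub>\<phi>\<close> for \<open>wnorm (\<lambda>x. \<phi> (V x)) \<nu>\<close> and \<open>\<parallel>\<nu>\<parallel>\<close> for the mass.
  Dropping the \<open>\<sigma>\<close>-term, the Lyapunov condition gives \<open>\<parallel>S s \<nu>\<parallel>\<^sub>V \<le> \<parallel>\<nu>\<parallel>\<^sub>V + b s \<parallel>\<nu>\<parallel>\<close>
  for nonnegative \<open>\<nu>\<close>. If \<open>\<nu>\<close> lives on a thin slice \<open>{c \<le> V < c + \<epsilon>}\<close>, Jensen's inequality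
  for the concave \<open>\<phi>\<close> and the bound \<open>\<phi> y \<le> \<phi> x + (y - x)\<close> (a consequence of \<open>\<phi> v \<le> v\<close>)
  turn this into \<open>\<parallel>S s \<nu>\<parallel>\<^sub>\<phi> \<le> \<parallel>\<nu>\<parallel>\<^sub>\<phi> + (b s + \<epsilon>) \<parallel>\<nu>\<parallel>\<close>. Summing over the slices below a
  level and bounding the tail above it by the exponential growth bound of \<open>S\<close> on \<open>\<M>\<^sub>V\<close>
  shows that \<open>u \<mapsto> \<parallel>S u \<mu>\<parallel>\<^sub>\<phi>\<close> grows at rate at most \<open>b \<parallel>\<mu>\<parallel>\<close>. Hence
  \<open>\<parallel>S u \<mu>\<parallel>\<^sub>\<phi> \<ge> \<parallel>S t \<mu>\<parallel>\<^sub>\<phi> - b (t - u) \<parallel>\<mu>\<parallel>\<close> for \<open>u \<le> t\<close>, and integrating this lower bound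
  in the Lyapunov condition gives the estimate.\<close>

definition nonneg_fsm :: "('a::topological_space set \<Rightarrow> real) \<Rightarrow> bool" where
  "nonneg_fsm \<nu> \<longleftrightarrow> fsm \<nu> \<and> (\<forall>A. 0 \<le> \<nu> A)"

definition restrict_fsm :: "('a::topological_space set \<Rightarrow> real) \<Rightarrow> 'a set \<Rightarrow> 'a set \<Rightarrow> real" where
  "restrict_fsm \<nu> B = (\<lambda>A. if A \<in> sets borel then \<nu> (A \<inter> B) else 0)"

lemma fsmE:
  assumes "fsm \<nu>"
  obtains M1 M2 where "sets M1 = sets borel" "sets M2 = sets borel"
    "finite_measure M1" "finite_measure M2"
    "\<And>A. A \<in> sets borel \<Longrightarrow> \<nu> A = measure M1 A - measure M2 A"
  using assms unfolding fsm_def by blast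

lemma fsm_nonborel: "fsm \<nu> \<Longrightarrow> A \<notin> sets borel \<Longrightarrow> \<nu> A = 0"
  unfolding fsm_def by blast

lemma fsm_empty: "fsm \<nu> \<Longrightarrow> \<nu> {} = 0"
  by (erule fsmE) auto

lemma fsm_Un:
  assumes "fsm \<nu>" "A \<in> sets borel" "B \<in> sets borel" "A \<inter> B = {}"
  shows "\<nu> (A \<union> B) = \<nu> A + \<nu> B"
proof -
  obtain M1 M2 where M: "sets M1 = sets borel" "sets M2 = sets borel"
    "finite_measure M1" "finite_measure M2"
    "\<And>A. A \<in> sets borel \<Longrightarrow> \<nu> A = measure M1 A - measure M2 A"
    using fsmE[OF assms(1)] by metis
  have "measure M1 (A \<union> B) = measure M1 A + measure M1 B"
    using finite_measure.finite_measure_Union[OF M(3)] M(1) assms by auto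
  moreover have "measure M2 (A \<union> B) = measure M2 A + measure M2 B"
    using finite_measure.finite_measure_Union[OF M(4)] M(2) assms by auto
  ultimately show ?thesis using M(5) assms by auto
qed

lemma fsm_sums:
  assumes "fsm \<nu>" "range A \<subseteq> sets borel" "disjoint_family A"
  shows "(\<lambda>i. \<nu> (A i)) sums \<nu> (\<Union>i. A i)"
proof -
  obtain M1 M2 where M: "sets M1 = sets borel" "sets M2 = sets borel"
    "finite_measure M1" "finite_measure M2"
    "\<And>A. A \<in> sets borel \<Longrightarrow> \<nu> A = measure M1 A - measure M2 A"
    using fsmE[OF assms(1)] by metis
  have "(\<lambda>i. measure M1 (A i)) sums measure M1 (\<Union>i. A i)"
    using finite_measure.finite_measure_UNION[OF M(3)] M(1) assms by auto
  moreover have "(\<lambda>i. measure M2 (A i)) sums measure M2 (\<Union>i. A i)"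
    using finite_measure.finite_measure_UNION[OF M(4)] M(2) assms by auto
  moreover have "(\<Union>i. A i) \<in> sets borel" using assms(2) by auto
  ultimately show ?thesis using sums_diff M(5) assms(2) by (fastforce simp: range_subsetD)
qed

lemma nonneg_fsm_mono:
  assumes "nonneg_fsm \<nu>" "A \<in> sets borel" "B \<in> sets borel" "A \<subseteq> B"
  shows "\<nu> A \<le> \<nu> B"
proof -
  have "\<nu> B = \<nu> A + \<nu> (B - A)"
    using fsm_Un[of \<nu> A "B - A"] assms unfolding nonneg_fsm_def by (auto simp: Un_absorb1)
  thus ?thesis using assms unfolding nonneg_fsm_def by (metis le_add_same_cancel1)
qed

lemma nonneg_fsm_zero_mass:
  assumes "nonneg_fsm \<nu>" "\<nu> UNIV = 0"
  shows "\<nu> = (\<lambda>A. 0)"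
proof
  fix A
  show "\<nu> A = 0"
  proof (cases "A \<in> sets borel")
    case True
    thus ?thesis using nonneg_fsm_mono[OF assms(1) True, of UNIV] assms unfolding nonneg_fsm_def
      by (metis order_antisym sets.top space_borel subset_UNIV)
  next
    case False
    thus ?thesis using assms(1) fsm_nonborel unfolding nonneg_fsm_def by blast
  qed
qed

lemma sigma_algebra_borel: "sigma_algebra UNIV (sets (borel::'a::topological_space measure))"
  by (metis sets.sigma_algebra_axioms space_borel)

lemma sets_jpos [simp]: "sets (jpos \<nu>) = sets borel"
  and space_jpos [simp]: "space (jpos \<nu>) = UNIV"
  and sets_jneg [simp]: "sets (jneg \<nu>) = sets borel"
  and space_jneg [simp]: "space (jneg \<nu>) = UNIV"
  unfolding jpos_def jneg_def
  by (simp_all add: sets_measure_of_conv sigma_algebra.sigma_sets_eq[OF sigma_algebra_borel])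

lemma borel_measurable_jpos: "f \<in> borel_measurable borel \<Longrightarrow> f \<in> borel_measurable (jpos \<nu>)"
  by (subst measurable_cong_sets[OF sets_jpos refl])

text \<open>For nonnegative \<open>\<nu>\<close> the supremum in the definition of \<open>jpos\<close> is attained at the set itself.\<close>
lemma emeasure_jpos:
  assumes "nonneg_fsm \<nu>" "A \<in> sets borel"
  shows "emeasure (jpos \<nu>) A = ennreal (\<nu> A)"
proof -
  have sup: "Sup {\<nu> B | B. B \<in> sets borel \<and> B \<subseteq> A} = \<nu> A" if "A \<in> sets borel" for A
    by (rule cSup_eq_maximum) (use that nonneg_fsm_mono[OF assms(1)] in auto)
  let ?f = "\<lambda>A. ennreal (Sup {\<nu> B | B. B \<in> sets borel \<and> B \<subseteq> A})"
  have ca: "countably_additive (sets borel) ?f"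
  proof (rule countably_additiveI)
    fix A :: "nat \<Rightarrow> 'a set"
    assume A: "range A \<subseteq> sets borel" "disjoint_family A" "(\<Union>i. A i) \<in> sets borel"
    have "(\<lambda>i. \<nu> (A i)) sums \<nu> (\<Union>i. A i)"
      using fsm_sums assms(1) A unfolding nonneg_fsm_def by blast
    hence "(\<lambda>i. ennreal (\<nu> (A i))) sums ennreal (\<nu> (\<Union>i. A i))"
      using assms(1) unfolding nonneg_fsm_def by (subst sums_ennreal) auto
    hence "(\<Sum>i. ennreal (\<nu> (A i))) = ennreal (\<nu> (\<Union>i. A i))" by (rule sums_unique[symmetric])
    thus "(\<Sum>i. ?f (A i)) = ?f (\<Union>i. A i)" using sup A by (simp add: range_subsetD)
  qed
  have "positive (sets borel) ?f"
    unfolding positive_def using sup[of "{}"] fsm_empty assms(1) unfolding nonneg_fsm_def by auto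
  thus ?thesis unfolding jpos_def
    by (subst emeasure_measure_of_sigma[OF sigma_algebra_borel _ ca assms(2)]) (simp_all add: sup assms(2))
qed

lemma jneg_nonneg_fsm:
  assumes "nonneg_fsm \<nu>"
  shows "jneg \<nu> = null_measure borel"
proof -
  have "Sup {- \<nu> B | B. B \<in> sets borel \<and> B \<subseteq> A} = 0" for A
    by (rule cSup_eq_maximum)
       (use assms fsm_empty[of \<nu>] in \<open>auto simp: nonneg_fsm_def intro!: exI[of _ "{}"]\<close>)
  hence jneg: "jneg \<nu> = measure_of UNIV (sets borel) (\<lambda>A. ennreal 0)"
    unfolding jneg_def by simp
  have "countably_additive (sets borel) (\<lambda>A. ennreal 0 :: ennreal)"
    by (rule countably_additiveI) simp
  moreover have "positive (sets borel) (\<lambda>A. ennreal 0 :: ennreal)" unfolding positive_def by simp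
  ultimately have "emeasure (jneg \<nu>) A = 0" if "A \<in> sets borel" for A
    unfolding jneg using emeasure_measure_of_sigma[OF sigma_algebra_borel _ _ that] by simp
  thus ?thesis by (intro measure_eqI) simp_all
qed

lemma wnorm_nonneg_fsm:
  assumes "nonneg_fsm \<nu>"
  shows "wnorm W \<nu> = (\<integral>\<^sup>+ x. ennreal (W x) \<partial>jpos \<nu>)"
  unfolding wnorm_def jneg_nonneg_fsm[OF assms] by simp

lemma finite_measure_jpos: "nonneg_fsm \<nu> \<Longrightarrow> finite_measure (jpos \<nu>)"
  by (rule finite_measureI) (simp add: emeasure_jpos)

lemma wnorm_one: "nonneg_fsm \<nu> \<Longrightarrow> wnorm (\<lambda>_. 1) \<nu> = ennreal (\<nu> UNIV)"
  by (simp add: wnorm_nonneg_fsm emeasure_jpos)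

lemma wnorm_mono: "(\<And>x. W1 x \<le> W2 x) \<Longrightarrow> wnorm W1 \<nu> \<le> wnorm W2 \<nu>"
  unfolding wnorm_def by (intro add_mono nn_integral_mono) (simp_all add: ennreal_leI)

lemma nonneg_fsm_of_measure:
  assumes "finite_measure N" "sets N = sets borel"
    and \<nu>: "\<nu> = (\<lambda>A. if A \<in> sets borel then measure N A else 0)"
  shows "nonneg_fsm \<nu>" "jpos \<nu> = N"
proof -
  have "finite_measure (null_measure borel)" by (rule finite_measureI) simp
  hence "fsm \<nu>"
    using assms unfolding fsm_def
    by (intro conjI allI impI exI[of _ N] exI[of _ "null_measure borel"]) (auto simp: measure_def)
  thus nonneg: "nonneg_fsm \<nu>" unfolding nonneg_fsm_def \<nu> by simp
  show "jpos \<nu> = N"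
    by (rule measure_eqI)
       (use assms emeasure_jpos[OF nonneg] in \<open>simp_all add: finite_measure.emeasure_eq_measure\<close>)
qed

lemma nonneg_fsm_zero: "nonneg_fsm (\<lambda>A::'a::topological_space set. 0)"
  and jpos_zero: "jpos (\<lambda>A::'a set. 0) = null_measure borel"
proof -
  have fm: "finite_measure (null_measure borel :: 'a measure)" by (rule finite_measureI) simp
  have "(\<lambda>A. 0::real) = (\<lambda>A::'a set. if A \<in> sets borel then measure (null_measure borel) A else 0)"
    by (rule ext) (simp add: measure_def)
  from nonneg_fsm_of_measure[OF fm _ this]
  show "nonneg_fsm (\<lambda>A::'a set. 0)" "jpos (\<lambda>A::'a set. 0) = null_measure borel" by simp_all
qed

lemma wnorm_zero: "wnorm W (\<lambda>A. 0) = 0"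
  by (simp add: wnorm_nonneg_fsm[OF nonneg_fsm_zero] jpos_zero)

lemma nonneg_fsm_scale:
  assumes "nonneg_fsm \<nu>" "0 \<le> c"
  shows "nonneg_fsm (\<lambda>A. c * \<nu> A)"
proof -
  let ?N = "scale_measure c (jpos \<nu>)"
  have "finite_measure ?N"
    by (rule finite_measureI)
       (use assms in \<open>simp add: space_scale_measure emeasure_jpos flip: ennreal_mult'\<close>)
  moreover have "c * \<nu> A = (if A \<in> sets borel then measure ?N A else 0)" for A
    using assms fsm_nonborel[of \<nu> A] emeasure_jpos[OF assms(1), of A]
    by (auto simp: measure_def nonneg_fsm_def simp flip: ennreal_mult')
  ultimately show ?thesis using nonneg_fsm_of_measure(1)[of ?N] by simp
qed

lemma restrict_fsm_UNIV: "fsm \<nu> \<Longrightarrow> restrict_fsm \<nu> UNIV = \<nu>"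
  unfolding restrict_fsm_def using fsm_nonborel by fastforce

lemma restrict_fsm_empty: "fsm \<nu> \<Longrightarrow> restrict_fsm \<nu> {} = (\<lambda>A. 0)"
  unfolding restrict_fsm_def using fsm_empty by fastforce

lemma restrict_fsm_mass: "B \<in> sets borel \<Longrightarrow> restrict_fsm \<nu> B UNIV = \<nu> B"
  unfolding restrict_fsm_def by simp

lemma restrict_fsm_Un:
  assumes "fsm \<nu>" "B \<in> sets borel" "C \<in> sets borel" "B \<inter> C = {}"
  shows "restrict_fsm \<nu> (B \<union> C) = (\<lambda>A. restrict_fsm \<nu> B A + restrict_fsm \<nu> C A)"
proof
  fix A
  show "restrict_fsm \<nu> (B \<union> C) A = restrict_fsm \<nu> B A + restrict_fsm \<nu> C A"
  proof (cases "A \<in> sets borel")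
    case True
    have "A \<inter> (B \<union> C) = (A \<inter> B) \<union> (A \<inter> C)" by blast
    thus ?thesis
      unfolding restrict_fsm_def using True assms fsm_Un[OF assms(1), of "A \<inter> B" "A \<inter> C"] by auto
  qed (simp add: restrict_fsm_def)
qed

lemma nonneg_fsm_restrict:
  assumes "nonneg_fsm \<nu>" "B \<in> sets borel"
  shows "nonneg_fsm (restrict_fsm \<nu> B)" "jpos (restrict_fsm \<nu> B) = density (jpos \<nu>) (indicator B)"
proof -
  interpret finite_measure "jpos \<nu>" by (rule finite_measure_jpos[OF assms(1)])
  have fm: "finite_measure (density (jpos \<nu>) (indicator B))"
    by (rule finite_measureI) (simp add: emeasure_restricted assms)
  have "measure (density (jpos \<nu>) (indicator B)) A = \<nu> (A \<inter> B)" if "A \<in> sets borel" for A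
    using that assms emeasure_restricted[of B "jpos \<nu>" A]
    by (simp add: measure_def Int_commute emeasure_jpos[OF assms(1)] nonneg_fsm_def)
  hence "restrict_fsm \<nu> B =
      (\<lambda>A. if A \<in> sets borel then measure (density (jpos \<nu>) (indicator B)) A else 0)"
    unfolding restrict_fsm_def by auto
  from nonneg_fsm_of_measure[OF fm _ this]
  show "nonneg_fsm (restrict_fsm \<nu> B)"
    "jpos (restrict_fsm \<nu> B) = density (jpos \<nu>) (indicator B)" by simp_all
qed

lemma wnorm_restrict_fsm:
  assumes "nonneg_fsm \<nu>" "B \<in> sets borel" "W \<in> borel_measurable borel"
  shows "wnorm W (restrict_fsm \<nu> B) = (\<integral>\<^sup>+ x. indicator B x * ennreal (W x) \<partial>jpos \<nu>)"
proof -
  have W: "(\<lambda>x. ennreal (W x)) \<in> borel_measurable (jpos \<nu>)"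
    using borel_measurable_jpos[OF assms(3)] by measurable
  have B: "indicator B \<in> borel_measurable (jpos \<nu>)"
    using assms(2) by (intro borel_measurable_indicator) simp
  show ?thesis
    unfolding wnorm_nonneg_fsm[OF nonneg_fsm_restrict(1)[OF assms(1,2)]]
      nonneg_fsm_restrict(2)[OF assms(1,2)]
    by (rule nn_integral_density[OF B W])
qed

lemma wnorm_restrict_fsm_le_wnorm:
  assumes "nonneg_fsm \<nu>" "B \<in> sets borel" "W \<in> borel_measurable borel"
  shows "wnorm W (restrict_fsm \<nu> B) \<le> wnorm W \<nu>"
  unfolding wnorm_restrict_fsm[OF assms] wnorm_nonneg_fsm[OF assms(1)]
  by (rule nn_integral_mono) (simp add: indicator_def)

lemma nn_integral_const_indicator_jpos:
  assumes "nonneg_fsm \<nu>" "B \<in> sets borel" "0 \<le> k"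
  shows "(\<integral>\<^sup>+ x. ennreal k * indicator B x \<partial>jpos \<nu>) = ennreal (k * \<nu> B)"
  using assms nn_integral_cmult_indicator[of B "jpos \<nu>" "ennreal k"]
  by (simp add: emeasure_jpos ennreal_mult' nonneg_fsm_def)

lemma wnorm_restrict_fsm_le:
  assumes "nonneg_fsm \<nu>" "B \<in> sets borel" "W \<in> borel_measurable borel"
    and "0 \<le> k" "\<And>x. x \<in> B \<Longrightarrow> W x \<le> k"
  shows "wnorm W (restrict_fsm \<nu> B) \<le> ennreal (k * \<nu> B)"
proof -
  have "wnorm W (restrict_fsm \<nu> B) \<le> (\<integral>\<^sup>+ x. ennreal k * indicator B x \<partial>jpos \<nu>)"
    unfolding wnorm_restrict_fsm[OF assms(1-3)]
    by (rule nn_integral_mono) (auto simp: indicator_def assms(5) ennreal_leI)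
  also have "\<dots> = ennreal (k * \<nu> B)"
    using assms(1,2,4) by (rule nn_integral_const_indicator_jpos)
  finally show ?thesis .
qed

lemma wnorm_restrict_fsm_ge:
  assumes "nonneg_fsm \<nu>" "B \<in> sets borel" "W \<in> borel_measurable borel"
    and "0 \<le> k" "\<And>x. x \<in> B \<Longrightarrow> k \<le> W x"
  shows "ennreal (k * \<nu> B) \<le> wnorm W (restrict_fsm \<nu> B)"
proof -
  have "ennreal (k * \<nu> B) = (\<integral>\<^sup>+ x. ennreal k * indicator B x \<partial>jpos \<nu>)"
    using nn_integral_const_indicator_jpos[OF assms(1,2,4)] by simp
  also have "\<dots> \<le> wnorm W (restrict_fsm \<nu> B)"
    unfolding wnorm_restrict_fsm[OF assms(1-3)]
    by (rule nn_integral_mono) (auto simp: indicator_def assms(5) ennreal_leI)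
  finally show ?thesis .
qed

lemma nn_integral_emeasure_add:
  assumes sets_Q: "sets Q = sets M" and sets_N: "sets N = sets M"
    and emeasure_Q: "\<And>X. X \<in> sets M \<Longrightarrow> emeasure Q X = emeasure M X + emeasure N X"
    and f: "f \<in> borel_measurable M"
  shows "integral\<^sup>N Q f = integral\<^sup>N M f + integral\<^sup>N N f"
proof -
  have space_Q: "space Q = space M" and space_N: "space N = space M"
    using sets_Q sets_N sets_eq_imp_space_eq by blast+
  obtain g where g: "\<And>i. simple_function M (g i)" "incseq g" "\<And>x. (SUP i. g i x) = f x"
    using borel_measurable_implies_simple_function_sequence'[OF f] by metis
  have simple_Q: "simple_function Q (g i)" and simple_N: "simple_function N (g i)" for i
    using g(1)[of i] unfolding simple_function_def space_Q space_N sets_Q sets_N by simp_all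
  have g_M: "g i \<in> borel_measurable M" for i using g(1) by (rule borel_measurable_simple_function)
  hence g_Q: "g i \<in> borel_measurable Q" and g_N: "g i \<in> borel_measurable N" for i
    by (simp_all add: measurable_cong_sets[OF sets_Q refl] measurable_cong_sets[OF sets_N refl])
  have simple: "integral\<^sup>N Q (g i) = integral\<^sup>N M (g i) + integral\<^sup>N N (g i)" for i
  proof -
    have "integral\<^sup>S Q (g i) = (\<Sum>x\<in>g i ` space M. x * (emeasure M (g i -` {x} \<inter> space M)
        + emeasure N (g i -` {x} \<inter> space M)))"
      unfolding simple_integral_def space_Q
      by (rule sum.cong[OF refl]) (simp add: emeasure_Q simple_functionD(2)[OF g(1)[of i]])
    also have "\<dots> = integral\<^sup>S M (g i) + integral\<^sup>S N (g i)"
      unfolding simple_integral_def space_N by (simp only: distrib_left sum.distrib)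
    finally show ?thesis
      by (simp only: nn_integral_eq_simple_integral g(1) simple_Q simple_N)
  qed
  have f_eq: "f = (\<lambda>x. SUP i. g i x)" using g(3) by auto
  have "integral\<^sup>N Q f = (SUP i. integral\<^sup>N M (g i) + integral\<^sup>N N (g i))"
    unfolding f_eq nn_integral_monotone_convergence_SUP[OF g(2) g_Q] by (simp add: simple)
  also have "\<dots> = (SUP i. integral\<^sup>N M (g i)) + (SUP i. integral\<^sup>N N (g i))"
    by (rule ennreal_SUP_add) (use g(2) in \<open>auto intro!: nn_integral_mono simp: incseq_def le_fun_def\<close>)
  also have "\<dots> = integral\<^sup>N M f + integral\<^sup>N N f"
    unfolding f_eq
    by (simp add: nn_integral_monotone_convergence_SUP[OF g(2) g_M]
        nn_integral_monotone_convergence_SUP[OF g(2) g_N])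
  finally show ?thesis .
qed

lemma wnorm_add:
  assumes "nonneg_fsm \<alpha>" "nonneg_fsm \<beta>" "nonneg_fsm \<gamma>" "\<And>A. \<gamma> A = \<alpha> A + \<beta> A"
    and "W \<in> borel_measurable borel"
  shows "wnorm W \<gamma> = wnorm W \<alpha> + wnorm W \<beta>"
  unfolding wnorm_nonneg_fsm[OF assms(1)] wnorm_nonneg_fsm[OF assms(2)] wnorm_nonneg_fsm[OF assms(3)]
proof (rule nn_integral_emeasure_add)
  show "emeasure (jpos \<gamma>) X = emeasure (jpos \<alpha>) X + emeasure (jpos \<beta>) X"
    if "X \<in> sets (jpos \<alpha>)" for X
    using that assms by (simp add: emeasure_jpos nonneg_fsm_def ennreal_plus)
  show "(\<lambda>x. ennreal (W x)) \<in> borel_measurable (jpos \<alpha>)"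
    using borel_measurable_jpos[OF assms(5)] by measurable
qed simp_all

lemma concave_on_slope_antimono:
  fixes f :: "real \<Rightarrow> real"
  assumes "concave_on I f" "x \<in> I" "z \<in> I" "x < y" "y < z"
  shows "(f z - f y) / (z - y) \<le> (f y - f x) / (y - x)"
proof -
  have convex: "convex_on I (\<lambda>v. - f v)" using assms(1) unfolding concave_on_def .
  have "(- f x - - f y) / (x - y) \<le> (- f y - - f z) / (y - z)"
    using convex_on_slope_le[OF convex assms(2,3,4,5)] by linarith
  also have "(- f x - - f y) / (x - y) = - ((f y - f x) / (y - x))"
    by (simp add: divide_simps) argo
  also have "(- f y - - f z) / (y - z) = - ((f z - f y) / (z - y))"
    by (simp add: divide_simps) argo
  finally show ?thesis by simp
qed

lemma concave_on_atLeast_mono: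
  fixes f :: "real \<Rightarrow> real"
  assumes f: "concave_on {a..} f" and bdd: "\<And>v. a \<le> v \<Longrightarrow> m \<le> f v"
    and xy: "a \<le> x" "x \<le> y"
  shows "f x \<le> f y"
proof (rule ccontr)
  assume "\<not> f x \<le> f y"
  hence decrease: "f y < f x" and "x < y" using xy by (auto simp: not_le dual_order.order_iff_strict)
  define s where "s = (f x - f y) / (y - x)"
  have s: "0 < s" unfolding s_def using decrease \<open>x < y\<close> by simp
  \<comment> \<open>a point beyond \<open>y\<close> where the chord through \<open>x, y\<close> has dropped below \<open>m\<close>\<close>
  define z where "z = y + (f y - m + 1) / s"
  have "m \<le> f y" using bdd xy by simp
  hence "y < z" unfolding z_def using s by simp
  hence "(f z - f y) / (z - y) \<le> - s"
    using concave_on_slope_antimono[OF f _ _ \<open>x < y\<close>, of z] xy unfolding s_def by (simp add: minus_divide_left)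
  hence "f z \<le> f y - s * (z - y)" using \<open>y < z\<close> by (simp add: divide_simps)
  also have "\<dots> = m - 1" unfolding z_def using s by simp
  finally show False using bdd[of z] \<open>y < z\<close> xy by simp
qed

lemma concave_on_increment_le:
  fixes f :: "real \<Rightarrow> real"
  assumes f: "concave_on {a..} f" and slope: "\<And>v. a \<le> v \<Longrightarrow> f v \<le> f a + (v - a)"
    and xy: "a \<le> x" "x \<le> y"
  shows "f y \<le> f x + (y - x)"
proof (cases "a < x \<and> x < y")
  case True
  have "(f y - f x) / (y - x) \<le> (f x - f a) / (x - a)"
    using concave_on_slope_antimono[OF f, of a y x] True by simp
  also have "\<dots> \<le> 1" using slope[of x] True by simp
  finally show ?thesis using True by (simp add: divide_simps)
next
  case False
  hence "x = a \<or> x = y" using xy by linarith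
  thus ?thesis using slope[of y] xy by auto
qed

lemma concave_on_supporting_line:
  fixes f :: "real \<Rightarrow> real"
  assumes f: "concave_on {a..} f" and mono: "mono_on {a..} f" and x: "a < x"
  obtains k where "0 \<le> k" "\<And>y. a \<le> y \<Longrightarrow> f y \<le> f x + k * (y - x)"
proof -
  define F where "F = Inf ((\<lambda>t. ((- f x) - (- f t)) / (x - t)) ` ({x<..} \<inter> {a..}))"
  have "x \<in> interior {a..}" using x by simp
  hence line: "- f x + F * (y - x) \<le> - f y" if "a \<le> y" for y
    using convex_le_Inf_differential[OF f[unfolded concave_on_def]] that unfolding F_def by simp
  have "f x \<le> f (x + 1)" using mono x by (auto intro: mono_onD)
  hence "F \<le> 0" using line[of "x + 1"] x by simp
  thus ?thesis using line by (intro that[of "- F"]) (auto simp: algebra_simps)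
qed
lemma admissible_rate_ge_1: "admissible_rate \<phi> \<Longrightarrow> 1 \<le> v \<Longrightarrow> 1 \<le> \<phi> v"
  unfolding admissible_rate_def by blast

lemma admissible_rate_mono_on:
  assumes "admissible_rate \<phi>"
  shows "mono_on {1..} \<phi>"
  using concave_on_atLeast_mono[of 1 \<phi> 1] assms unfolding admissible_rate_def
  by (intro mono_onI) auto

lemma admissible_rate_increment_le:
  assumes "admissible_rate \<phi>" "\<And>v. 1 \<le> v \<Longrightarrow> \<phi> v \<le> v" "1 \<le> x" "x \<le> y"
  shows "\<phi> y \<le> \<phi> x + (y - x)"
  using concave_on_increment_le[of 1 \<phi> x y] assms unfolding admissible_rate_def by auto

lemma borel_measurable_admissible_rate_comp:
  assumes "admissible_rate \<phi>" "V \<in> borel_measurable M" "\<And>x. 1 \<le> V x"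
  shows "(\<lambda>x. \<phi> (V x)) \<in> borel_measurable M"
proof -
  have "mono (\<lambda>v. \<phi> (max 1 v))"
    using mono_onD[OF admissible_rate_mono_on[OF assms(1)]] by (intro monoI) auto
  hence "(\<lambda>v. \<phi> (max 1 v)) \<in> borel_measurable borel" by (rule borel_measurable_mono)
  from measurable_compose[OF assms(2) this] show ?thesis
    using assms(3) by (simp add: max_absorb2)
qed

text \<open>A Jensen inequality: integrate the supporting line of \<open>\<phi>\<close> at \<open>c\<close>.\<close>
lemma wnorm_admissible_rate_comp_le:
  assumes \<rho>: "nonneg_fsm \<rho>" and \<phi>: "admissible_rate \<phi>"
    and V: "V \<in> borel_measurable borel" "\<And>x. 1 \<le> V x"
    and c: "1 < c" and bound: "wnorm V \<rho> \<le> ennreal (c * \<rho> UNIV)"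
  shows "wnorm (\<lambda>x. \<phi> (V x)) \<rho> \<le> ennreal (\<phi> c * \<rho> UNIV)"
proof -
  define m where "m = \<rho> UNIV"
  have m: "0 \<le> m" using \<rho> unfolding m_def nonneg_fsm_def by simp
  obtain k where k: "0 \<le> k" "\<And>y. 1 \<le> y \<Longrightarrow> \<phi> y \<le> \<phi> c + k * (y - c)"
    using concave_on_supporting_line[OF _ admissible_rate_mono_on[OF \<phi>] c] \<phi>
    unfolding admissible_rate_def by blast
  have \<phi>c: "1 \<le> \<phi> c" using admissible_rate_ge_1[OF \<phi>] c by simp
  have line: "ennreal (\<phi> (V x)) + ennreal (k * c) \<le> ennreal (\<phi> c) + ennreal k * ennreal (V x)" for x
  proof -
    have "\<phi> (V x) + k * c \<le> \<phi> c + k * V x" using k(2)[of "V x"] V(2) by (simp add: algebra_simps)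
    moreover have "0 \<le> \<phi> (V x)" using admissible_rate_ge_1[OF \<phi> V(2)[of x]] by simp
    moreover have "0 \<le> k * V x" using k(1) V(2)[of x] by simp
    ultimately show ?thesis
      using k(1) c \<phi>c by (simp flip: ennreal_plus ennreal_mult' add: ennreal_leI)
  qed
  define N where "N = jpos \<rho>"
  have N: "space N = UNIV" "emeasure N UNIV = ennreal m"
    unfolding N_def m_def using emeasure_jpos[OF \<rho>] by simp_all
  have \<phi>V: "(\<lambda>x. ennreal (\<phi> (V x))) \<in> borel_measurable N"
    unfolding N_def using borel_measurable_jpos[OF borel_measurable_admissible_rate_comp[OF \<phi> V]]
    by measurable
  have V': "(\<lambda>x. ennreal (V x)) \<in> borel_measurable N"
    unfolding N_def using borel_measurable_jpos[OF V(1)] by measurable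
  have "wnorm (\<lambda>x. \<phi> (V x)) \<rho> + ennreal (k * c) * ennreal m
      = (\<integral>\<^sup>+ x. ennreal (\<phi> (V x)) + ennreal (k * c) \<partial>N)"
    unfolding wnorm_nonneg_fsm[OF \<rho>] N_def[symmetric] using \<phi>V by (simp add: nn_integral_add N)
  also have "\<dots> \<le> (\<integral>\<^sup>+ x. ennreal (\<phi> c) + ennreal k * ennreal (V x) \<partial>N)"
    by (rule nn_integral_mono) (rule line)
  also have "\<dots> = ennreal (\<phi> c) * ennreal m + ennreal k * wnorm V \<rho>"
    unfolding wnorm_nonneg_fsm[OF \<rho>] N_def[symmetric] using V'
    by (simp add: nn_integral_add nn_integral_cmult N)
  also have "\<dots> \<le> ennreal (\<phi> c) * ennreal m + ennreal k * ennreal (c * m)"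
    using bound unfolding m_def by (intro add_left_mono mult_left_mono) simp_all
  finally have "wnorm (\<lambda>x. \<phi> (V x)) \<rho> + ennreal (k * c) * ennreal m
      \<le> ennreal (\<phi> c) * ennreal m + ennreal k * ennreal (c * m)" .
  moreover have "ennreal (k * c) * ennreal m = ennreal (k * c * m)"
    and "ennreal k * ennreal (c * m) = ennreal (k * c * m)"
    and "ennreal (\<phi> c) * ennreal m = ennreal (\<phi> c * m)"
    using k(1) c m \<phi>c by (simp_all add: ennreal_mult' mult.assoc)
  ultimately have "ennreal (k * c * m) + wnorm (\<lambda>x. \<phi> (V x)) \<rho> \<le> ennreal (k * c * m) + ennreal (\<phi> c * m)"
    by (simp add: add.commute)
  thus ?thesis unfolding ennreal_add_left_cancel_le m_def by simp
qed

lemma stochastic_semigroup_op: "stochastic_semigroup S \<Longrightarrow> 0 \<le> t \<Longrightarrow> stochastic_op (S t)"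
  unfolding stochastic_semigroup_def by simp

lemma stochastic_semigroup_fsm:
  assumes "stochastic_semigroup S" "0 \<le> t" "fsm \<mu>"
  shows "fsm (S t \<mu>)"
proof -
  have "\<forall>\<mu>. fsm \<mu> \<longrightarrow> fsm (S t \<mu>)"
    using stochastic_semigroup_op[OF assms(1,2)] unfolding stochastic_op_def by (elim conjE)
  with assms(3) show ?thesis by simp
qed

lemma stochastic_semigroup_linear:
  assumes "stochastic_semigroup S" "0 \<le> t" "fsm \<mu>" "fsm \<nu>"
  shows "S t (\<lambda>A. a * \<mu> A + c * \<nu> A) = (\<lambda>A. a * S t \<mu> A + c * S t \<nu> A)"
proof -
  have "\<forall>\<mu> \<nu> a c. fsm \<mu> \<longrightarrow> fsm \<nu> \<longrightarrow>
      S t (\<lambda>A. a * \<mu> A + c * \<nu> A) = (\<lambda>A. a * S t \<mu> A + c * S t \<nu> A)"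
    using stochastic_semigroup_op[OF assms(1,2)] unfolding stochastic_op_def by (elim conjE)
  with assms(3,4) show ?thesis by simp
qed

lemma stochastic_semigroup_add:
  assumes "stochastic_semigroup S" "0 \<le> t" "fsm \<mu>" "fsm \<nu>"
  shows "S t (\<lambda>A. \<mu> A + \<nu> A) = (\<lambda>A. S t \<mu> A + S t \<nu> A)"
  using stochastic_semigroup_linear[OF assms, of 1 1] by simp

lemma stochastic_semigroup_zero:
  assumes "stochastic_semigroup S" "0 \<le> t"
  shows "S t (\<lambda>A. 0) = (\<lambda>A. 0)"
  using stochastic_semigroup_linear[OF assms, of "\<lambda>A. 0" "\<lambda>A. 0" 0 0] nonneg_fsm_zero
  unfolding nonneg_fsm_def by simp

text \<open>Nonnegative measures are, up to their mass, probability measures, which \<open>S t\<close> preserves.\<close>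
lemma stochastic_semigroup_nonneg_fsm:
  assumes S: "stochastic_semigroup S" and t: "0 \<le> t" and \<nu>: "nonneg_fsm \<nu>"
  shows "nonneg_fsm (S t \<nu>)" "S t \<nu> UNIV = \<nu> UNIV"
proof -
  have "nonneg_fsm (S t \<nu>) \<and> S t \<nu> UNIV = \<nu> UNIV"
  proof (cases "\<nu> UNIV = 0")
    case True
    hence "\<nu> = (\<lambda>A. 0)" by (rule nonneg_fsm_zero_mass[OF \<nu>])
    thus ?thesis using stochastic_semigroup_zero[OF S t] nonneg_fsm_zero True by simp
  next
    case False
    define m where "m = \<nu> UNIV"
    define \<pi> where "\<pi> = (\<lambda>A. (1/m) * \<nu> A)"
    have m: "0 < m" using False \<nu> unfolding m_def nonneg_fsm_def by (simp add: order_less_le)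
    have "nonneg_fsm \<pi>" unfolding \<pi>_def by (rule nonneg_fsm_scale[OF \<nu>]) (use m in simp)
    hence "prob_sm \<pi>"
      using m unfolding prob_sm_def nonneg_fsm_def m_def \<pi>_def by simp
    hence prob: "prob_sm (S t \<pi>)"
      using stochastic_semigroup_op[OF S t] unfolding stochastic_op_def by simp
    have "S t \<pi> = (\<lambda>A. (1/m) * S t \<nu> A)"
      using stochastic_semigroup_linear[OF S t, of \<nu> \<nu> "1/m" 0] \<nu>
      unfolding nonneg_fsm_def \<pi>_def by simp
    hence "S t \<nu> A = m * S t \<pi> A" for A using m by simp
    moreover have "fsm (S t \<nu>)" using stochastic_semigroup_fsm[OF S t] \<nu> unfolding nonneg_fsm_def by blast
    ultimately show ?thesis using prob m unfolding prob_sm_def nonneg_fsm_def m_def by simp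
  qed
  thus "nonneg_fsm (S t \<nu>)" "S t \<nu> UNIV = \<nu> UNIV" by blast+
qed

lemma set_integrable_mono_on:
  fixes f :: "real \<Rightarrow> real"
  assumes "mono_on {a..b} f"
  shows "set_integrable lborel {a..b} f"
proof -
  have "integrable (lebesgue_on {a..b}) f" using assms by (rule integrable_mono_on)
  hence "integrable lebesgue (\<lambda>x. indicator {a..b} x *\<^sub>R f x)"
    by (subst integrable_restrict_space[symmetric]) auto
  moreover have "(\<lambda>x. indicator {a..b} x *\<^sub>R f x) \<in> borel_measurable lborel"
    using borel_measurable_mono_on_fnc[OF assms]
    by (subst (asm) borel_measurable_restrict_space_iff) auto
  ultimately show ?thesis
    unfolding set_integrable_def by (simp add: integrable_completion)
qed

lemma set_integral_Icc_le_const: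
  fixes f :: "real \<Rightarrow> real"
  assumes "0 \<le> t" "0 \<le> c" "\<And>u. u \<in> {0..t} \<Longrightarrow> f u \<le> c"
  shows "(LINT u:{0..t}|lborel. f u) \<le> c * t"
proof (cases "set_integrable lborel {0..t} f")
  case True
  have "set_integrable lborel {0..t} (\<lambda>_. c)"
    unfolding set_integrable_def by (rule borel_integrable_compact) auto
  with True have "(LINT u:{0..t}|lborel. f u) \<le> (LINT u:{0..t}|lborel. c)"
    using assms(3) by (rule set_integral_mono)
  also have "\<dots> = c * t" using assms(1) by (subst set_integral_const) auto
  finally show ?thesis .
next
  case False
  hence "(LINT u:{0..t}|lborel. f u) = 0"
    unfolding set_lebesgue_integral_def set_integrable_def by (rule not_integrable_integral_eq)
  thus ?thesis using assms(1,2) by simp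
qed

text \<open>If \<open>w\<close> grows at rate at most \<open>c\<close>, then \<open>w u \<ge> w t - c (t - u)\<close> on \<open>[0, t]\<close>, and
  \<open>u \<mapsto> c u - w u\<close> is monotone, hence integrable.\<close>
lemma set_integral_drift_le:
  fixes w :: "real \<Rightarrow> real"
  assumes t: "0 \<le> t" and \<sigma>: "0 \<le> \<sigma>"
    and drift: "\<And>u u'. 0 \<le> u \<Longrightarrow> u \<le> u' \<Longrightarrow> u' \<le> t \<Longrightarrow> w u' \<le> w u + c * (u' - u)"
  shows "(LINT u:{0..t}|lborel. a - \<sigma> * w u) \<le> a * t - \<sigma> * t * w t + \<sigma> * c * t\<^sup>2 / 2"
proof -
  have "mono_on {0..t} (\<lambda>u. c * u - w u)"
    by (rule mono_onI) (use drift in \<open>force simp: algebra_simps\<close>)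
  hence "set_integrable lborel {0..t} (\<lambda>u. c * u - w u)" by (rule set_integrable_mono_on)
  moreover have "set_integrable lborel {0..t} (\<lambda>u. a - \<sigma> * c * u)"
    unfolding set_integrable_def by (rule borel_integrable_compact) (auto intro!: continuous_intros)
  ultimately have "set_integrable lborel {0..t} (\<lambda>u. (a - \<sigma> * c * u) + \<sigma> * (c * u - w u))"
    by (intro set_integral_add set_integrable_mult_right)
  hence int_w: "set_integrable lborel {0..t} (\<lambda>u. a - \<sigma> * w u)"
    by (simp add: algebra_simps)
  define H where "H u = a - \<sigma> * (w t - c * (t - u))" for u
  have int_H: "set_integrable lborel {0..t} H"
    unfolding set_integrable_def H_def by (rule borel_integrable_compact) (auto intro!: continuous_intros)
  have "a - \<sigma> * w u \<le> H u" if "u \<in> {0..t}" for u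
  proof -
    have "w t - c * (t - u) \<le> w u" using drift[of u t] that by (simp add: algebra_simps)
    thus ?thesis unfolding H_def using \<sigma> by (simp add: mult_left_mono)
  qed
  hence "(LINT u:{0..t}|lborel. a - \<sigma> * w u) \<le> (LINT u:{0..t}|lborel. H u)"
    by (rule set_integral_mono[OF int_w int_H])
  also have "\<dots> = a * t - \<sigma> * t * w t + \<sigma> * c * t\<^sup>2 / 2"
  proof -
    have "(\<integral>u. H u * indicator {0..t} u \<partial>lborel)
        = (\<lambda>u. (a - \<sigma> * w t + \<sigma> * c * t) * u - \<sigma> * c * u\<^sup>2 / 2) t
          - (\<lambda>u. (a - \<sigma> * w t + \<sigma> * c * t) * u - \<sigma> * c * u\<^sup>2 / 2) 0"
      unfolding H_def
      by (rule integral_FTC_Icc_real)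
         (use t in \<open>auto intro!: derivative_eq_intros continuous_intros simp: algebra_simps\<close>)
    thus ?thesis
      unfolding set_lebesgue_integral_def by (simp add: mult.commute power2_eq_square algebra_simps)
  qed
  finally show ?thesis .
qed

locale weak_lyapunov_semigroup =
  fixes V :: "'a::topological_space \<Rightarrow> real" and \<phi> :: "real \<Rightarrow> real"
    and S :: "real \<Rightarrow> ('a set \<Rightarrow> real) \<Rightarrow> ('a set \<Rightarrow> real)" and b \<sigma> :: real
  assumes V_measurable: "V \<in> borel_measurable borel" and V_ge_1: "\<And>x. 1 \<le> V x"
    and rate: "admissible_rate \<phi>" and rate_le: "\<And>v. 1 \<le> v \<Longrightarrow> \<phi> v \<le> v"
    and semigroup_on: "stochastic_semigroup_on V S"
    and b_nonneg: "0 \<le> b" and \<sigma>_nonneg: "0 \<le> \<sigma>"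
    and lyapunov: "\<And>t \<mu>. 0 \<le> t \<Longrightarrow> nonneg_fsm \<mu> \<Longrightarrow> wnorm V \<mu> < \<infinity> \<Longrightarrow>
       enn2real (wnorm V (S t \<mu>)) \<le> enn2real (wnorm V \<mu>) +
         (LINT u:{0..t}|lborel. b * enn2real (wnorm (\<lambda>_. 1) (S u \<mu>))
                                - \<sigma> * enn2real (wnorm (\<lambda>x. \<phi> (V x)) (S u \<mu>)))"
begin

abbreviation \<phi>V :: "'a \<Rightarrow> real" where "\<phi>V \<equiv> \<lambda>x. \<phi> (V x)"

lemma semigroup: "stochastic_semigroup S"
  using semigroup_on unfolding stochastic_semigroup_on_def by blast

lemma semigroup_nonneg_fsm: "0 \<le> s \<Longrightarrow> nonneg_fsm \<nu> \<Longrightarrow> nonneg_fsm (S s \<nu>)"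
  and semigroup_mass: "0 \<le> s \<Longrightarrow> nonneg_fsm \<nu> \<Longrightarrow> S s \<nu> UNIV = \<nu> UNIV"
  using stochastic_semigroup_nonneg_fsm[OF semigroup] by blast+

lemma wnorm_V_semigroup_finite: "0 \<le> s \<Longrightarrow> nonneg_fsm \<nu> \<Longrightarrow> wnorm V \<nu> < \<infinity> \<Longrightarrow> wnorm V (S s \<nu>) < \<infinity>"
  using semigroup_on unfolding stochastic_semigroup_on_def nonneg_fsm_def by blast

lemma \<phi>V_measurable: "\<phi>V \<in> borel_measurable borel"
  using borel_measurable_admissible_rate_comp[OF rate V_measurable V_ge_1] .

lemma sets_V_less: "{x. V x < c} \<in> sets borel"
  and sets_V_ge: "{x. c \<le> V x} \<in> sets borel"
  and sets_V_between: "{x. c \<le> V x \<and> V x < d} \<in> sets borel"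
proof -
  have "{x \<in> space borel. V x < c} \<in> sets borel" "{x \<in> space borel. c \<le> V x} \<in> sets borel"
    "{x \<in> space borel. c \<le> V x \<and> V x < d} \<in> sets borel"
    using V_measurable by measurable
  thus "{x. V x < c} \<in> sets borel" "{x. c \<le> V x} \<in> sets borel"
    "{x. c \<le> V x \<and> V x < d} \<in> sets borel" by simp_all
qed

lemma wnorm_\<phi>V_le_wnorm_V: "wnorm \<phi>V \<nu> \<le> wnorm V \<nu>"
  by (rule wnorm_mono) (use rate_le V_ge_1 in auto)

lemma wnorm_V_semigroup_le:
  assumes s: "0 \<le> s" and \<nu>: "nonneg_fsm \<nu>" and fin: "wnorm V \<nu> < \<infinity>"
  shows "wnorm V (S s \<nu>) \<le> wnorm V \<nu> + ennreal (b * s * \<nu> UNIV)"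
proof -
  define m where "m = \<nu> UNIV"
  have m: "0 \<le> m" using \<nu> unfolding m_def nonneg_fsm_def by simp
  have "(LINT u:{0..s}|lborel. b * enn2real (wnorm (\<lambda>_. 1) (S u \<nu>))
      - \<sigma> * enn2real (wnorm \<phi>V (S u \<nu>))) \<le> b * m * s"
  proof (rule set_integral_Icc_le_const)
    fix u :: real assume "u \<in> {0..s}"
    hence "enn2real (wnorm (\<lambda>_. 1) (S u \<nu>)) = m"
      using wnorm_one[OF semigroup_nonneg_fsm] semigroup_mass \<nu> m unfolding m_def by simp
    thus "b * enn2real (wnorm (\<lambda>_. 1) (S u \<nu>)) - \<sigma> * enn2real (wnorm \<phi>V (S u \<nu>)) \<le> b * m"
      using \<sigma>_nonneg by simp
  qed (use s b_nonneg m in auto)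
  with lyapunov[OF s \<nu> fin] have "enn2real (wnorm V (S s \<nu>)) \<le> enn2real (wnorm V \<nu>) + b * s * m"
    by (simp add: algebra_simps)
  hence "ennreal (enn2real (wnorm V (S s \<nu>))) \<le> ennreal (enn2real (wnorm V \<nu>)) + ennreal (b * s * m)"
    using s b_nonneg m by (simp add: ennreal_leI flip: ennreal_plus)
  thus ?thesis
    using fin wnorm_V_semigroup_finite[OF s \<nu> fin] unfolding m_def by (simp add: less_top)
qed

lemma wnorm_\<phi>V_semigroup_concentrated:
  assumes s: "0 \<le> s" and \<nu>: "nonneg_fsm \<nu>" and a: "1 < a"
    and bound: "wnorm V \<nu> \<le> ennreal (a * \<nu> UNIV)"
  shows "wnorm \<phi>V (S s \<nu>) \<le> ennreal (\<phi> (a + b * s) * \<nu> UNIV)"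
proof -
  have m: "0 \<le> \<nu> UNIV" using \<nu> unfolding nonneg_fsm_def by simp
  have "wnorm V (S s \<nu>) \<le> wnorm V \<nu> + ennreal (b * s * \<nu> UNIV)"
    using bound by (intro wnorm_V_semigroup_le[OF s \<nu>]) (simp add: le_less_trans less_top)
  also have "\<dots> \<le> ennreal (a * \<nu> UNIV) + ennreal (b * s * \<nu> UNIV)"
    using bound by (rule add_right_mono)
  also have "\<dots> = ennreal ((a + b * s) * S s \<nu> UNIV)"
    using a m s b_nonneg semigroup_mass[OF s \<nu>] by (simp add: distrib_right flip: ennreal_plus)
  finally have "wnorm V (S s \<nu>) \<le> ennreal ((a + b * s) * S s \<nu> UNIV)" .
  moreover have "1 < a + b * s" using a mult_nonneg_nonneg[OF b_nonneg s] by linarith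
  ultimately show ?thesis
    using wnorm_admissible_rate_comp_le[OF semigroup_nonneg_fsm[OF s \<nu>] rate V_measurable V_ge_1]
      semigroup_mass[OF s \<nu>] by simp
qed

lemma wnorm_\<phi>V_semigroup_slice:
  assumes s: "0 \<le> s" and \<nu>: "nonneg_fsm \<nu>" and c: "1 \<le> c" and \<epsilon>: "0 < \<epsilon>"
  defines "P \<equiv> {x. c \<le> V x \<and> V x < c + \<epsilon>}"
  shows "wnorm \<phi>V (S s (restrict_fsm \<nu> P))
     \<le> wnorm \<phi>V (restrict_fsm \<nu> P) + ennreal ((b * s + \<epsilon>) * \<nu> P)"
proof -
  have P: "P \<in> sets borel" unfolding P_def by (rule sets_V_between)
  have \<nu>P: "nonneg_fsm (restrict_fsm \<nu> P)" and mass: "restrict_fsm \<nu> P UNIV = \<nu> P"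
    using nonneg_fsm_restrict(1)[OF \<nu> P] restrict_fsm_mass[OF P] .
  have m: "0 \<le> \<nu> P" using \<nu> unfolding nonneg_fsm_def by simp
  have bs: "0 \<le> b * s" using b_nonneg s by simp
  have \<phi>c: "1 \<le> \<phi> c" using admissible_rate_ge_1[OF rate c] .
  have "wnorm V (restrict_fsm \<nu> P) \<le> ennreal ((c + \<epsilon>) * restrict_fsm \<nu> P UNIV)"
    unfolding mass using c \<epsilon>
    by (intro wnorm_restrict_fsm_le[OF \<nu> P V_measurable]) (auto simp: P_def)
  hence "wnorm \<phi>V (S s (restrict_fsm \<nu> P)) \<le> ennreal (\<phi> (c + \<epsilon> + b * s) * \<nu> P)"
    using wnorm_\<phi>V_semigroup_concentrated[OF s \<nu>P] c \<epsilon> unfolding mass by simp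
  also have "\<dots> \<le> ennreal ((\<phi> c + (b * s + \<epsilon>)) * \<nu> P)"
    using admissible_rate_increment_le[OF rate rate_le c, of "c + \<epsilon> + b * s"] \<epsilon> bs m
    by (intro ennreal_leI mult_right_mono) simp_all
  also have "\<dots> = ennreal (\<phi> c * \<nu> P) + ennreal ((b * s + \<epsilon>) * \<nu> P)"
    using \<phi>c m \<epsilon> bs by (simp add: distrib_right flip: ennreal_plus)
  also have "\<dots> \<le> wnorm \<phi>V (restrict_fsm \<nu> P) + ennreal ((b * s + \<epsilon>) * \<nu> P)"
    using \<phi>c c by (intro add_right_mono wnorm_restrict_fsm_ge[OF \<nu> P \<phi>V_measurable])
      (auto simp: P_def intro: mono_onD[OF admissible_rate_mono_on[OF rate]])
  finally show ?thesis .
qed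

lemma wnorm_\<phi>V_semigroup_below_level:
  assumes s: "0 \<le> s" and \<nu>: "nonneg_fsm \<nu>" and \<epsilon>: "0 < \<epsilon>"
  shows "wnorm \<phi>V (S s (restrict_fsm \<nu> {x. V x < 1 + real n * \<epsilon>}))
    \<le> wnorm \<phi>V (restrict_fsm \<nu> {x. V x < 1 + real n * \<epsilon>})
      + ennreal ((b * s + \<epsilon>) * \<nu> {x. V x < 1 + real n * \<epsilon>})"
proof (induction n)
  case 0
  have "{x. V x < 1} = {}" using V_ge_1 by (auto simp: not_less)
  thus ?case
    using restrict_fsm_empty[of \<nu>] \<nu> stochastic_semigroup_zero[OF semigroup s] wnorm_zero
    unfolding nonneg_fsm_def by simp
next
  case (Suc n)
  define L where "L = {x. V x < 1 + real n * \<epsilon>}"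
  define P where "P = {x. 1 + real n * \<epsilon> \<le> V x \<and> V x < 1 + real n * \<epsilon> + \<epsilon>}"
  have L: "L \<in> sets borel" and P: "P \<in> sets borel"
    unfolding L_def P_def by (rule sets_V_less, rule sets_V_between)
  have LP: "{x. V x < 1 + real (Suc n) * \<epsilon>} = L \<union> P" "L \<inter> P = {}"
    unfolding L_def P_def using \<epsilon> by (auto simp: algebra_simps)
  have fsm: "fsm \<nu>" using \<nu> unfolding nonneg_fsm_def by blast
  have \<nu>L: "nonneg_fsm (restrict_fsm \<nu> L)" and \<nu>P: "nonneg_fsm (restrict_fsm \<nu> P)"
    and \<nu>LP: "nonneg_fsm (restrict_fsm \<nu> (L \<union> P))"
    using nonneg_fsm_restrict(1)[OF \<nu>] L P by auto
  have split: "restrict_fsm \<nu> (L \<union> P) = (\<lambda>A. restrict_fsm \<nu> L A + restrict_fsm \<nu> P A)"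
    by (rule restrict_fsm_Un[OF fsm L P LP(2)])
  have "S s (restrict_fsm \<nu> (L \<union> P)) = (\<lambda>A. S s (restrict_fsm \<nu> L) A + S s (restrict_fsm \<nu> P) A)"
    unfolding split using \<nu>L \<nu>P
    by (intro stochastic_semigroup_add[OF semigroup s]) (auto simp: nonneg_fsm_def)
  hence "wnorm \<phi>V (S s (restrict_fsm \<nu> (L \<union> P)))
      = wnorm \<phi>V (S s (restrict_fsm \<nu> L)) + wnorm \<phi>V (S s (restrict_fsm \<nu> P))"
    by (intro wnorm_add semigroup_nonneg_fsm[OF s] \<nu>L \<nu>P \<nu>LP \<phi>V_measurable) simp
  also have "\<dots> \<le> (wnorm \<phi>V (restrict_fsm \<nu> L) + ennreal ((b * s + \<epsilon>) * \<nu> L))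
      + (wnorm \<phi>V (restrict_fsm \<nu> P) + ennreal ((b * s + \<epsilon>) * \<nu> P))"
    using Suc.IH wnorm_\<phi>V_semigroup_slice[OF s \<nu> _ \<epsilon>, of "1 + real n * \<epsilon>"] \<epsilon>
    unfolding L_def P_def by (intro add_mono) simp_all
  also have "\<dots> = wnorm \<phi>V (restrict_fsm \<nu> (L \<union> P)) + ennreal ((b * s + \<epsilon>) * \<nu> (L \<union> P))"
  proof -
    have "wnorm \<phi>V (restrict_fsm \<nu> (L \<union> P)) = wnorm \<phi>V (restrict_fsm \<nu> L) + wnorm \<phi>V (restrict_fsm \<nu> P)"
      using \<nu>L \<nu>P \<nu>LP split by (intro wnorm_add \<phi>V_measurable) simp_all
    moreover have "ennreal ((b * s + \<epsilon>) * \<nu> (L \<union> P))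
        = ennreal ((b * s + \<epsilon>) * \<nu> L) + ennreal ((b * s + \<epsilon>) * \<nu> P)"
      using fsm_Un[OF fsm L P LP(2)] \<nu> b_nonneg s \<epsilon>
      by (simp add: distrib_left nonneg_fsm_def flip: ennreal_plus)
    ultimately show ?thesis by (simp add: algebra_simps)
  qed
  finally show ?case unfolding LP(1) .
qed

lemma wnorm_V_upper_tail_small:
  assumes \<nu>: "nonneg_fsm \<nu>" and fin: "wnorm V \<nu> < \<infinity>" and \<delta>: "0 < \<delta>"
  obtains K where "\<And>K'. K \<le> K' \<Longrightarrow> wnorm V (restrict_fsm \<nu> {x. K' \<le> V x}) < ennreal \<delta>"
proof -
  define f where "f n x = indicator {x. real n \<le> V x} x * ennreal (V x)" for n :: nat and x
  have f_measurable: "f n \<in> borel_measurable (jpos \<nu>)" for n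
    unfolding f_def using sets_V_ge[of "real n"] borel_measurable_jpos[OF V_measurable]
    by measurable
  have "decseq f"
    by (intro decseq_SucI le_funI) (auto simp: f_def indicator_def)
  moreover have "(\<integral>\<^sup>+ x. f 0 x \<partial>jpos \<nu>) < \<infinity>"
    using fin V_ge_1 unfolding f_def wnorm_nonneg_fsm[OF \<nu>]
    by (simp add: indicator_def order_trans[OF zero_le_one])
  moreover have "(INF n. f n x) = 0" for x
  proof -
    obtain n :: nat where "V x < n" using reals_Archimedean2 by blast
    hence "f n x = 0" unfolding f_def by simp
    thus ?thesis by (metis INF_lower UNIV_I le_zero_eq)
  qed
  ultimately have "(INF n. integral\<^sup>N (jpos \<nu>) (f n)) = 0"
    using nn_integral_monotone_convergence_INF_decseq[of f, OF _ f_measurable] by simp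
  then obtain n where n: "integral\<^sup>N (jpos \<nu>) (f n) < ennreal \<delta>"
    using \<delta> by (metis INF_less_iff ennreal_0 ennreal_less_iff order.refl)
  show ?thesis
  proof (rule that)
    fix K' assume "real n \<le> K'"
    hence "wnorm V (restrict_fsm \<nu> {x. K' \<le> V x}) \<le> integral\<^sup>N (jpos \<nu>) (f n)"
      unfolding wnorm_restrict_fsm[OF \<nu> sets_V_ge V_measurable] f_def
      by (intro nn_integral_mono) (auto simp: indicator_def)
    with n show "wnorm V (restrict_fsm \<nu> {x. K' \<le> V x}) < ennreal \<delta>" by simp
  qed
qed

lemma semigroup_wnorm_V_bound:
  assumes "0 \<le> s"
  obtains D where "0 < D"
    "\<And>\<mu>. fsm \<mu> \<Longrightarrow> wnorm V \<mu> < \<infinity> \<Longrightarrow> wnorm V (S s \<mu>) \<le> ennreal D * wnorm V \<mu>"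
proof -
  obtain C \<omega> where "1 \<le> C"
    and "\<And>\<mu>. fsm \<mu> \<Longrightarrow> wnorm V \<mu> < \<infinity> \<Longrightarrow>
      wnorm V (S s \<mu>) \<le> ennreal (C * exp (\<omega> * s)) * wnorm V \<mu>"
    using semigroup_on assms unfolding stochastic_semigroup_on_def by blast
  thus ?thesis using that[of "C * exp (\<omega> * s)"] by simp
qed

lemma wnorm_semigroup_split_level:
  assumes s: "0 \<le> s" and \<nu>: "nonneg_fsm \<nu>" and W: "W \<in> borel_measurable borel"
  shows "wnorm W (S s \<nu>) = wnorm W (S s (restrict_fsm \<nu> {x. V x < K}))
    + wnorm W (S s (restrict_fsm \<nu> {x. K \<le> V x}))"
proof -
  let ?L = "{x. V x < K}" and ?T = "{x. K \<le> V x}"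
  have \<nu>L: "nonneg_fsm (restrict_fsm \<nu> ?L)" and \<nu>T: "nonneg_fsm (restrict_fsm \<nu> ?T)"
    using nonneg_fsm_restrict(1)[OF \<nu>] sets_V_less sets_V_ge by auto
  have fsm: "fsm \<nu>" using \<nu> unfolding nonneg_fsm_def by blast
  have "?L \<union> ?T = UNIV" by auto
  hence "\<nu> = restrict_fsm \<nu> (?L \<union> ?T)" using restrict_fsm_UNIV[OF fsm] by simp
  also have "\<dots> = (\<lambda>A. restrict_fsm \<nu> ?L A + restrict_fsm \<nu> ?T A)"
    by (rule restrict_fsm_Un[OF fsm sets_V_less sets_V_ge]) auto
  finally have "S s \<nu> = (\<lambda>A. S s (restrict_fsm \<nu> ?L) A + S s (restrict_fsm \<nu> ?T) A)"
    using \<nu>L \<nu>T stochastic_semigroup_add[OF semigroup s] unfolding nonneg_fsm_def by metis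
  thus ?thesis by (intro wnorm_add semigroup_nonneg_fsm[OF s] \<nu> \<nu>L \<nu>T W) simp
qed

lemma wnorm_\<phi>V_semigroup_le:
  assumes s: "0 \<le> s" and \<nu>: "nonneg_fsm \<nu>" and fin: "wnorm V \<nu> < \<infinity>"
  shows "wnorm \<phi>V (S s \<nu>) \<le> wnorm \<phi>V \<nu> + ennreal (b * s * \<nu> UNIV)"
proof (rule ennreal_le_epsilon)
  fix e :: real assume e: "0 < e"
  obtain D where D: "0 < D"
    and growth: "\<And>\<mu>. fsm \<mu> \<Longrightarrow> wnorm V \<mu> < \<infinity> \<Longrightarrow> wnorm V (S s \<mu>) \<le> ennreal D * wnorm V \<mu>"
    using semigroup_wnorm_V_bound[OF s] by blast
  define m where "m = \<nu> UNIV"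
  have m: "0 \<le> m" using \<nu> unfolding m_def nonneg_fsm_def by simp
  define \<epsilon> where "\<epsilon> = e / (2 * (m + 1))"
  have \<epsilon>: "0 < \<epsilon>" "\<epsilon> * m \<le> e / 2" unfolding \<epsilon>_def using e m by (simp_all add: field_simps)
  obtain K where K: "\<And>K'. K \<le> K' \<Longrightarrow> wnorm V (restrict_fsm \<nu> {x. K' \<le> V x}) < ennreal (e / (2 * D))"
    using wnorm_V_upper_tail_small[OF \<nu> fin, of "e / (2 * D)"] e D by auto
  obtain n :: nat where "(K - 1) / \<epsilon> < n" using reals_Archimedean2 by blast
  hence level: "K \<le> 1 + real n * \<epsilon>" using \<epsilon> by (simp add: field_simps)
  define L where "L = {x. V x < 1 + real n * \<epsilon>}"
  define T where "T = {x. 1 + real n * \<epsilon> \<le> V x}"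
  have L: "L \<in> sets borel" and T: "T \<in> sets borel"
    unfolding L_def T_def by (rule sets_V_less, rule sets_V_ge)
  have "wnorm \<phi>V (S s \<nu>) = wnorm \<phi>V (S s (restrict_fsm \<nu> L)) + wnorm \<phi>V (S s (restrict_fsm \<nu> T))"
    unfolding L_def T_def by (rule wnorm_semigroup_split_level[OF s \<nu> \<phi>V_measurable])
  also have "\<dots> \<le> (wnorm \<phi>V \<nu> + ennreal (b * s * m + e / 2)) + ennreal (e / 2)"
  proof (rule add_mono)
    have "(b * s + \<epsilon>) * \<nu> L \<le> (b * s + \<epsilon>) * m"
      using nonneg_fsm_mono[OF \<nu> L, of UNIV] b_nonneg s \<epsilon> unfolding m_def
      by (intro mult_left_mono) simp_all
    hence "ennreal ((b * s + \<epsilon>) * \<nu> L) \<le> ennreal (b * s * m + e / 2)"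
      using \<epsilon> by (intro ennreal_leI) (simp add: algebra_simps)
    thus "wnorm \<phi>V (S s (restrict_fsm \<nu> L)) \<le> wnorm \<phi>V \<nu> + ennreal (b * s * m + e / 2)"
      using wnorm_\<phi>V_semigroup_below_level[OF s \<nu> \<epsilon>(1), of n]
        wnorm_restrict_fsm_le_wnorm[OF \<nu> L \<phi>V_measurable]
      unfolding L_def by (meson add_mono order_trans)
  next
    have \<nu>T: "nonneg_fsm (restrict_fsm \<nu> T)" using nonneg_fsm_restrict(1)[OF \<nu> T] .
    have "wnorm V (restrict_fsm \<nu> T) < \<infinity>"
      using wnorm_restrict_fsm_le_wnorm[OF \<nu> T V_measurable] fin by (simp add: le_less_trans)
    hence "wnorm \<phi>V (S s (restrict_fsm \<nu> T)) \<le> ennreal D * wnorm V (restrict_fsm \<nu> T)"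
      using wnorm_\<phi>V_le_wnorm_V growth \<nu>T unfolding nonneg_fsm_def by (blast intro: order_trans)
    also have "\<dots> \<le> ennreal D * ennreal (e / (2 * D))"
      using K[OF level] unfolding T_def by (intro mult_left_mono) simp_all
    also have "\<dots> = ennreal (e / 2)" using D e by (simp flip: ennreal_mult')
    finally show "wnorm \<phi>V (S s (restrict_fsm \<nu> T)) \<le> ennreal (e / 2)" .
  qed
  also have "\<dots> = wnorm \<phi>V \<nu> + ennreal (b * s * \<nu> UNIV) + ennreal e"
    using b_nonneg s m e unfolding m_def by (simp add: add.assoc flip: ennreal_plus)
  finally show "wnorm \<phi>V (S s \<nu>) \<le> wnorm \<phi>V \<nu> + ennreal (b * s * \<nu> UNIV) + ennreal e" .
qed

lemma wnorm_\<phi>V_semigroup_drift: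
  assumes u: "0 \<le> u" "u \<le> u'" and \<mu>: "nonneg_fsm \<mu>" and fin: "wnorm V \<mu> < \<infinity>"
  shows "enn2real (wnorm \<phi>V (S u' \<mu>)) \<le> enn2real (wnorm \<phi>V (S u \<mu>)) + b * \<mu> UNIV * (u' - u)"
proof -
  define \<nu> where "\<nu> = S u \<mu>"
  have \<nu>: "nonneg_fsm \<nu>" "\<nu> UNIV = \<mu> UNIV" "wnorm V \<nu> < \<infinity>"
    unfolding \<nu>_def using semigroup_nonneg_fsm semigroup_mass wnorm_V_semigroup_finite u \<mu> fin by auto
  have "S u' \<mu> = S (u' - u) \<nu>"
    using semigroup u \<mu> unfolding stochastic_semigroup_def nonneg_fsm_def \<nu>_def by simp
  moreover have "wnorm \<phi>V (S (u' - u) \<nu>) \<le> wnorm \<phi>V \<nu> + ennreal (b * (u' - u) * \<nu> UNIV)"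
    using u by (intro wnorm_\<phi>V_semigroup_le \<nu>) simp
  moreover have "wnorm \<phi>V \<nu> < \<infinity>" using wnorm_\<phi>V_le_wnorm_V \<nu>(3) by (rule le_less_trans)
  ultimately have "enn2real (wnorm \<phi>V (S u' \<mu>)) \<le> enn2real (wnorm \<phi>V \<nu> + ennreal (b * (u' - u) * \<nu> UNIV))"
    by (intro enn2real_mono) (simp_all add: less_top)
  also have "\<dots> = enn2real (wnorm \<phi>V \<nu>) + b * (u' - u) * \<nu> UNIV"
    using \<open>wnorm \<phi>V \<nu> < \<infinity>\<close> \<nu>(1) b_nonneg u
    by (simp add: enn2real_plus less_top nonneg_fsm_def)
  finally show ?thesis unfolding \<nu>_def using \<nu>(2) by (simp add: \<nu>_def algebra_simps)
qed

lemma wnorm_V_\<phi>V_semigroup_estimate: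
  assumes t: "0 \<le> t" and \<mu>: "nonneg_fsm \<mu>" and fin: "wnorm V \<mu> < \<infinity>"
  shows "enn2real (wnorm V (S t \<mu>)) + \<sigma> * t * enn2real (wnorm \<phi>V (S t \<mu>))
    \<le> enn2real (wnorm V \<mu>) + b * t * (1 + \<sigma> * t / 2) * enn2real (wnorm (\<lambda>_. 1) \<mu>)"
proof -
  define m where "m = \<mu> UNIV"
  have m: "0 \<le> m" using \<mu> unfolding m_def nonneg_fsm_def by simp
  have mass: "enn2real (wnorm (\<lambda>_. 1) (S u \<mu>)) = m" if "0 \<le> u" for u
    using wnorm_one[OF semigroup_nonneg_fsm[OF that \<mu>]] semigroup_mass[OF that \<mu>] m
    unfolding m_def by simp
  define w where "w u = enn2real (wnorm \<phi>V (S u \<mu>))" for u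
  have "(LINT u:{0..t}|lborel. b * enn2real (wnorm (\<lambda>_. 1) (S u \<mu>)) - \<sigma> * w u)
      = (LINT u:{0..t}|lborel. b * m - \<sigma> * w u)"
    by (rule set_lebesgue_integral_cong) (simp_all add: mass)
  also have "\<dots> \<le> b * m * t - \<sigma> * t * w t + \<sigma> * (b * m) * t\<^sup>2 / 2"
    using wnorm_\<phi>V_semigroup_drift[OF _ _ \<mu> fin] t \<sigma>_nonneg unfolding w_def m_def
    by (intro set_integral_drift_le) (simp_all add: algebra_simps)
  finally show ?thesis
    using lyapunov[OF t \<mu> fin] mass[of 0] \<mu> wnorm_one[OF \<mu>] m
    unfolding w_def m_def by (simp add: algebra_simps power2_eq_square)
qed

end

theorem corollary5p8:
  fixes V :: "'a::metric_space \<Rightarrow> real"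
    and \<phi> :: "real \<Rightarrow> real"
    and S :: "real \<Rightarrow> ('a set \<Rightarrow> real) \<Rightarrow> ('a set \<Rightarrow> real)"
    and b \<sigma> :: real
  assumes "locally_compact_space (euclidean :: 'a topology)"
    and "separable_space (euclidean :: 'a topology)"
    and "continuous_on UNIV V" and "\<forall>x. V x \<ge> 1"
    and "admissible_rate \<phi>" and "\<forall>v\<ge>1. \<phi> v \<le> v"
    and "feller_type S" and "stochastic_semigroup_on V S"
    and "b > 0" and "\<sigma> > 0"
    and lyap: "\<forall>t\<ge>0. \<forall>\<mu>. fsm \<mu> \<and> (\<forall>A. \<mu> A \<ge> 0) \<and> wnorm V \<mu> < \<infinity> \<longrightarrow>
       enn2real (wnorm V (S t \<mu>)) \<le> enn2real (wnorm V \<mu>) +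
         (LINT u:{0..t}|lborel. b * enn2real (wnorm (\<lambda>_. 1) (S u \<mu>))
                                - \<sigma> * enn2real (wnorm (\<lambda>x. \<phi> (V x)) (S u \<mu>)))"
  shows "\<forall>t\<ge>0. \<forall>\<mu>. fsm \<mu> \<and> (\<forall>A. \<mu> A \<ge> 0) \<and> wnorm V \<mu> < \<infinity> \<longrightarrow>
       enn2real (wnorm V (S t \<mu>)) + \<sigma> * t * enn2real (wnorm (\<lambda>x. \<phi> (V x)) (S t \<mu>))
         \<le> enn2real (wnorm V \<mu>) + b * t * (1 + \<sigma> * t / 2) * enn2real (wnorm (\<lambda>_. 1) \<mu>)"
proof -
  interpret weak_lyapunov_semigroup V \<phi> S b \<sigma>
  proof
    show "V \<in> borel_measurable borel" using assms(3) by (rule borel_measurable_continuous_onI)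
  qed (use assms in \<open>auto simp: nonneg_fsm_def\<close>)
  show ?thesis using wnorm_V_\<phi>V_semigroup_estimate unfolding nonneg_fsm_def by blast
qed

end
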